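(* Let $G$ be a finite group, $H\le G$ with $[G:H]=n$, $\pi:H\to A$ a homomorphism into an abelian group $A$, and $t_1,\dots,t_n$ representatives of the right cosets of $H$ in $G$ (so $G=\bigsqcup_i Ht_i$) with $1\in\{t_1,\dots,t_n\}$. Define $f:G\to A$ by $f(ht_i)=\pi(h)$ for $h\in H$. For $x\in G$ and each $i$, let $(i)x$ be the index with $t_ix\in Ht_{(i)x}$. Then: (i) $f^h=f$ for all $h\in H$, so $H\le \mathrm{Stab}_G(f)$; (ii) for all $x\in G$, $$\prod_{i=1}^n \pi\bigl(t_ixt_{(i)x}^{-1}\bigr)=\prod_{i=1}^n f^{t_i}(x)=\bigl(\overline f(x)\bigr)^m,\qquad m=[\mathrm{Stab}_G(f):H],$$ where $\overline f$ is the average function of $f$. In particular the transfer map $x\mapsto\prod_{i=1}^n \pi(t_ixt_{(i)x}^{-1})$ is a homomorphism $G\to A$.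
   Context: For a function $f:G\to A$ and $a\in G$, $f^a(x)=f(a)^{-1}f(ax)$. $\mathrm{Stab}_G(f)=\{a\in G: f^a=f\}$. The average function of $f:G\to A$ ($A$ abelian) is $\overline f(x)=\prod_{j} f^{g_j}(x)$, where $f^{g_1},\dots,f^{g_k}$ are the distinct elements of $\{f^g:g\in G\}$. *)

theory Defs
  imports "HOL-Algebra.Algebra"
begin

definition coset_rep :: "('a, 'm) monoid_scheme \<Rightarrow> 'a set \<Rightarrow> 'a set \<Rightarrow> 'a \<Rightarrow> 'a" where
  "coset_rep G H T y = (THE t. t \<in> T \<and> y \<in> H #>\<^bsub>G\<^esub> t)"

(* f : G \<rightarrow> A with f(h t_i) = \<pi>(h), i.e. f(y) = \<pi>(y t^{-1}) where t is the representative of H y *)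
definition coset_fun :: "('a, 'm) monoid_scheme \<Rightarrow> 'a set \<Rightarrow> 'a set \<Rightarrow> ('a \<Rightarrow> 'b) \<Rightarrow> 'a \<Rightarrow> 'b" where
  "coset_fun G H T \<pi> = (\<lambda>y\<in>carrier G. \<pi> (y \<otimes>\<^bsub>G\<^esub> inv\<^bsub>G\<^esub> (coset_rep G H T y)))"

definition shift_fun :: "('a, 'm) monoid_scheme \<Rightarrow> ('b, 'n) monoid_scheme \<Rightarrow> ('a \<Rightarrow> 'b) \<Rightarrow> 'a \<Rightarrow> 'a \<Rightarrow> 'b" where
  "shift_fun G A f a = (\<lambda>x\<in>carrier G. inv\<^bsub>A\<^esub> (f a) \<otimes>\<^bsub>A\<^esub> f (a \<otimes>\<^bsub>G\<^esub> x))"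

(* Stab_G(f) = {a \<in> G. f^a = f} (functions compared on carrier G; f is given restricted to carrier G) *)
definition Stab_fun :: "('a, 'm) monoid_scheme \<Rightarrow> ('b, 'n) monoid_scheme \<Rightarrow> ('a \<Rightarrow> 'b) \<Rightarrow> 'a set" where
  "Stab_fun G A f = {a \<in> carrier G. shift_fun G A f a = f}"

definition avg_fun :: "('a, 'm) monoid_scheme \<Rightarrow> ('b, 'n) monoid_scheme \<Rightarrow> ('a \<Rightarrow> 'b) \<Rightarrow> 'a \<Rightarrow> 'b" where
  "avg_fun G A f x = finprod A (\<lambda>\<phi>. \<phi> x) ((shift_fun G A f) ` carrier G)"

definition transfer_map :: "('a, 'm) monoid_scheme \<Rightarrow> ('b, 'n) monoid_scheme \<Rightarrow> 'a set \<Rightarrow> 'a set \<Rightarrow> ('a \<Rightarrow> 'b) \<Rightarrow> 'a \<Rightarrow> 'b" where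
  "transfer_map G A H T \<pi> x = finprod A
     (\<lambda>t. \<pi> (t \<otimes>\<^bsub>G\<^esub> x \<otimes>\<^bsub>G\<^esub> inv\<^bsub>G\<^esub> (coset_rep G H T (t \<otimes>\<^bsub>G\<^esub> x)))) T"

end

theory Submission
  imports Defs
begin

text \<open>
  Since \<open>f(h y) = \<pi>(h) f(y)\<close> for \<open>h \<in> H\<close>, every element of \<open>H\<close> fixes \<open>f\<close>; and since
  \<open>f(t) = 1\<close> for \<open>t \<in> T\<close>, the factor \<open>f^t(x) = f(t x)\<close> is exactly \<open>\<pi>(t x t'^-1)\<close> where \<open>t'\<close>
  represents \<open>H t x\<close>. Shifting is an action, \<open>(f^a)^b = f^(a b)\<close>, so \<open>a \<mapsto> f^a\<close> is constant
  exactly on the right cosets of \<open>Stab(f)\<close>. Each of them is a union of \<open>m\<close> cosets of \<open>H\<close>, so every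
  distinct shift occurs \<open>m\<close> times among the \<open>f^t\<close>, \<open>t \<in> T\<close>, and the product is the \<open>m\<close>-th power
  of the average. Multiplicativity follows from the cocycle identity
  \<open>f^t(x y) = f^t(x) f^(t x)(y)\<close>, from \<open>f^(t x) = f^t'\<close>, and from \<open>t \<mapsto> t'\<close> permuting \<open>T\<close>.
\<close>

lemma (in comm_monoid) finprod_pow_nat:
  "f \<in> I \<rightarrow> carrier G \<Longrightarrow> (\<Otimes>i\<in>I. f i [^] (n::nat)) = (\<Otimes>i\<in>I. f i) [^] n"
proof (induct I rule: infinite_finite_induct)
  case (insert a I)
  then have fa: "f a \<in> carrier G" and fI: "f \<in> I \<rightarrow> carrier G" by auto
  have "(\<Otimes>i\<in>insert a I. f i [^] n) = f a [^] n \<otimes> (\<Otimes>i\<in>I. f i [^] n)"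
    using insert fa fI by (intro finprod_insert) auto
  also have "\<dots> = (f a \<otimes> (\<Otimes>i\<in>I. f i)) [^] n"
    using insert fa fI by (simp add: nat_pow_distrib)
  also have "\<dots> = (\<Otimes>i\<in>insert a I. f i) [^] n" using insert fa fI by simp
  finally show ?case .
qed auto

lemma (in comm_monoid) finprod_comp_const_card_fibres:
  assumes "finite T" and "h \<in> g ` T \<rightarrow> carrier G"
    and "\<And>u. u \<in> g ` T \<Longrightarrow> card {t \<in> T. g t = u} = m"
  shows "(\<Otimes>t\<in>T. h (g t)) = (\<Otimes>u\<in>g ` T. h u) [^] m"
proof -
  have "(\<Otimes>t\<in>T. h (g t)) = (\<Otimes>t\<in>(\<Union>u\<in>g ` T. {t \<in> T. g t = u}). h (g t))"
    by (rule arg_cong[where f = "finprod G _"]) blast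
  also have "\<dots> = (\<Otimes>u\<in>g ` T. \<Otimes>t\<in>{t \<in> T. g t = u}. h (g t))"
    using assms(1,2)
    by (intro finprod_UN_disjoint) (auto simp: pairwise_def disjnt_def)
  also have "\<dots> = (\<Otimes>u\<in>g ` T. h u [^] m)"
  proof (rule finprod_cong')
    fix u assume u: "u \<in> g ` T"
    have "(\<Otimes>t\<in>{t \<in> T. g t = u}. h (g t)) = (\<Otimes>t\<in>{t \<in> T. g t = u}. h u)"
      using u assms(2) by (intro finprod_cong') auto
    also have "\<dots> = h u [^] m"
      using u assms(2) finprod_const[of "h u"] assms(3)[OF u] by auto
    finally show "(\<Otimes>t\<in>{t \<in> T. g t = u}. h (g t)) = h u [^] m" .
  qed (use assms(2) in auto)
  also have "\<dots> = (\<Otimes>u\<in>g ` T. h u) [^] m"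
    using assms(2) by (rule finprod_pow_nat)
  finally show ?thesis .
qed

lemma (in group) inv_mult_cancel_middle:
  assumes "u \<in> carrier G" "v \<in> carrier G" "w \<in> carrier G"
  shows "(inv u \<otimes> v) \<otimes> (inv v \<otimes> w) = inv u \<otimes> w"
  using assms by (simp add: m_assoc flip: m_assoc[of v "inv v"])

locale group_fun = G: group G + A: group A
  for G :: "('a, 'm) monoid_scheme" and A :: "('b, 'n) monoid_scheme" +
  fixes f :: "'a \<Rightarrow> 'b"
  assumes fun_closed: "f \<in> carrier G \<rightarrow> carrier A"
begin

lemma shift_fun_apply [simp]:
  "x \<in> carrier G \<Longrightarrow> shift_fun G A f a x = inv\<^bsub>A\<^esub> f a \<otimes>\<^bsub>A\<^esub> f (a \<otimes>\<^bsub>G\<^esub> x)"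
  unfolding shift_fun_def by simp

lemma shift_fun_closed:
  "a \<in> carrier G \<Longrightarrow> x \<in> carrier G \<Longrightarrow> shift_fun G A f a x \<in> carrier A"
  using fun_closed by auto

lemma shift_fun_mult:
  assumes "a \<in> carrier G" "x \<in> carrier G" "y \<in> carrier G"
  shows "shift_fun G A f a (x \<otimes>\<^bsub>G\<^esub> y)
    = shift_fun G A f a x \<otimes>\<^bsub>A\<^esub> shift_fun G A f (a \<otimes>\<^bsub>G\<^esub> x) y"
  using assms fun_closed A.inv_mult_cancel_middle by (simp add: G.m_assoc Pi_iff)

lemma shift_fun_shift_fun:
  assumes "a \<in> carrier G" "b \<in> carrier G"
  shows "shift_fun G A (shift_fun G A f a) b = shift_fun G A f (a \<otimes>\<^bsub>G\<^esub> b)"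
proof
  fix x
  show "shift_fun G A (shift_fun G A f a) b x = shift_fun G A f (a \<otimes>\<^bsub>G\<^esub> b) x"
  proof (cases "x \<in> carrier G")
    case True
    then show ?thesis
      using assms fun_closed A.inv_mult_cancel_middle
      by (simp add: shift_fun_def A.inv_mult_group G.m_assoc Pi_iff)
  qed (simp add: shift_fun_def)
qed

end

locale normalized_group_fun = group_fun +
  assumes fun_extensional: "f \<in> extensional (carrier G)"
    and fun_one: "f \<one>\<^bsub>G\<^esub> = \<one>\<^bsub>A\<^esub>"
begin

lemma shift_fun_one: "shift_fun G A f \<one>\<^bsub>G\<^esub> = f"
proof
  fix x
  show "shift_fun G A f \<one>\<^bsub>G\<^esub> x = f x"
    using fun_extensional fun_one fun_closed
    by (cases "x \<in> carrier G") (auto simp: shift_fun_def extensional_def Pi_iff)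
qed

lemma shift_fun_eq_iff_Stab_fun:
  assumes a: "a \<in> carrier G" and b: "b \<in> carrier G"
  shows "shift_fun G A f a = shift_fun G A f b \<longleftrightarrow> a \<otimes>\<^bsub>G\<^esub> inv\<^bsub>G\<^esub> b \<in> Stab_fun G A f"
proof
  assume ab: "shift_fun G A f a = shift_fun G A f b"
  have "shift_fun G A f (a \<otimes>\<^bsub>G\<^esub> inv\<^bsub>G\<^esub> b) = shift_fun G A (shift_fun G A f a) (inv\<^bsub>G\<^esub> b)"
    using a b by (simp add: shift_fun_shift_fun)
  also have "\<dots> = shift_fun G A f (b \<otimes>\<^bsub>G\<^esub> inv\<^bsub>G\<^esub> b)"
    using ab b by (simp add: shift_fun_shift_fun)
  finally show "a \<otimes>\<^bsub>G\<^esub> inv\<^bsub>G\<^esub> b \<in> Stab_fun G A f"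
    using a b shift_fun_one by (simp add: Stab_fun_def)
next
  assume "a \<otimes>\<^bsub>G\<^esub> inv\<^bsub>G\<^esub> b \<in> Stab_fun G A f"
  then have "shift_fun G A (shift_fun G A f (a \<otimes>\<^bsub>G\<^esub> inv\<^bsub>G\<^esub> b)) b = shift_fun G A f b"
    by (simp add: Stab_fun_def)
  then show "shift_fun G A f a = shift_fun G A f b"
    using a b by (simp add: shift_fun_shift_fun G.m_assoc)
qed

lemma shift_fun_level_set:
  assumes b: "b \<in> carrier G"
  shows "{y \<in> carrier G. shift_fun G A f y = shift_fun G A f b} = Stab_fun G A f #>\<^bsub>G\<^esub> b"
proof (intro equalityI subsetI)
  fix y assume "y \<in> {y \<in> carrier G. shift_fun G A f y = shift_fun G A f b}"
  then have y: "y \<in> carrier G" and "y \<otimes>\<^bsub>G\<^esub> inv\<^bsub>G\<^esub> b \<in> Stab_fun G A f"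
    using shift_fun_eq_iff_Stab_fun[OF _ b] by auto
  moreover have "y = (y \<otimes>\<^bsub>G\<^esub> inv\<^bsub>G\<^esub> b) \<otimes>\<^bsub>G\<^esub> b" using y b by (simp add: G.m_assoc)
  ultimately show "y \<in> Stab_fun G A f #>\<^bsub>G\<^esub> b" unfolding r_coset_def by blast
next
  fix y assume "y \<in> Stab_fun G A f #>\<^bsub>G\<^esub> b"
  then obtain s where s: "s \<in> Stab_fun G A f" and y: "y = s \<otimes>\<^bsub>G\<^esub> b"
    unfolding r_coset_def by blast
  have "s \<in> carrier G" using s by (simp add: Stab_fun_def)
  then show "y \<in> {y \<in> carrier G. shift_fun G A f y = shift_fun G A f b}"
    using s y b shift_fun_eq_iff_Stab_fun by (simp add: G.m_assoc)
qed

lemma card_shift_fun_level_set: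
  "b \<in> carrier G \<Longrightarrow>
    card {y \<in> carrier G. shift_fun G A f y = shift_fun G A f b} = card (Stab_fun G A f)"
  using G.card_rcosets_equal[OF G.rcosetsI] by (simp add: shift_fun_level_set Stab_fun_def)

end

locale right_transversal = group G for G :: "('a, 'm) monoid_scheme" (structure) +
  fixes H T :: "'a set"
  assumes subgroup_H: "subgroup H G"
    and transversal_subset: "T \<subseteq> carrier G"
    and unique_coset_rep: "\<forall>x\<in>carrier G. \<exists>!t. t \<in> T \<and> x \<in> H #> t"
begin

abbreviation rep :: "'a \<Rightarrow> 'a" where "rep \<equiv> coset_rep G H T"

lemma subgroup_subset: "H \<subseteq> carrier G"
  using subgroup_H by (rule subgroup.subset)

lemma transversal_carrier: "t \<in> T \<Longrightarrow> t \<in> carrier G"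
  using transversal_subset by blast

lemma coset_rep_in_transversal: "y \<in> carrier G \<Longrightarrow> rep y \<in> T"
  and mem_rcos_coset_rep: "y \<in> carrier G \<Longrightarrow> y \<in> H #> rep y"
  using theI'[OF bspec[OF unique_coset_rep]] unfolding coset_rep_def by blast+

lemma coset_rep_carrier: "y \<in> carrier G \<Longrightarrow> rep y \<in> carrier G"
  using coset_rep_in_transversal transversal_carrier by blast

lemma coset_rep_eqI:
  assumes "t \<in> T" "y \<in> H #> t"
  shows "rep y = t"
proof -
  have "y \<in> carrier G"
    using assms r_coset_subset_G[OF subgroup_subset transversal_carrier] by blast
  then show ?thesis
    unfolding coset_rep_def using assms unique_coset_rep by (blast intro: the1_equality)
qed

lemma coset_rep_transversal: "t \<in> T \<Longrightarrow> rep t = t"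
  using coset_rep_eqI rcos_self[OF transversal_carrier subgroup_H] by blast

lemma mult_inv_coset_rep:
  assumes y: "y \<in> carrier G"
  shows "y \<otimes> inv (rep y) \<in> H"
proof -
  obtain k where k: "k \<in> H" "y = k \<otimes> rep y"
    using mem_rcos_coset_rep[OF y] unfolding r_coset_def by blast
  have "(k \<otimes> rep y) \<otimes> inv (rep y) = k"
    using k(1) subgroup_subset coset_rep_carrier[OF y] by (auto simp: m_assoc)
  then show ?thesis using k by simp
qed

lemma coset_rep_mult_left:
  assumes h: "h \<in> H" and y: "y \<in> carrier G"
  shows "rep (h \<otimes> y) = rep y"
proof (rule coset_rep_eqI[OF coset_rep_in_transversal[OF y]])
  obtain k where k: "k \<in> H" "y = k \<otimes> rep y"
    using mem_rcos_coset_rep[OF y] unfolding r_coset_def by blast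
  have "h \<otimes> (k \<otimes> rep y) = (h \<otimes> k) \<otimes> rep y"
    using h k(1) y subgroup_subset coset_rep_carrier by (metis m_assoc subsetD)
  then have "h \<otimes> y = (h \<otimes> k) \<otimes> rep y" using k(2) by simp
  then show "h \<otimes> y \<in> H #> rep y"
    using h k(1) subgroup.m_closed[OF subgroup_H] unfolding r_coset_def by blast
qed

lemma coset_rep_mult_coset_rep:
  assumes "y \<in> carrier G" "x \<in> carrier G"
  shows "rep (rep y \<otimes> x) = rep (y \<otimes> x)"
proof -
  have "y \<otimes> x = (y \<otimes> inv (rep y)) \<otimes> (rep y \<otimes> x)"
    using assms coset_rep_carrier by (simp add: m_assoc flip: m_assoc[of "inv (rep y)"])
  then show ?thesis
    using assms coset_rep_carrier mult_inv_coset_rep coset_rep_mult_left by simp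
qed

lemma bij_betw_coset_rep_mult:
  assumes x: "x \<in> carrier G"
  shows "bij_betw (\<lambda>t. rep (t \<otimes> x)) T T"
proof (rule bij_betw_byWitness[where f' = "\<lambda>t. rep (t \<otimes> inv x)"])
  have "rep (rep (t \<otimes> y) \<otimes> inv y) = t" if "t \<in> T" "y \<in> carrier G" for t y
    using that transversal_carrier coset_rep_mult_coset_rep coset_rep_transversal
    by (simp add: m_assoc)
  then show "\<forall>t\<in>T. rep (rep (t \<otimes> x) \<otimes> inv x) = t" "\<forall>t\<in>T. rep (rep (t \<otimes> inv x) \<otimes> x) = t"
    using x by (metis inv_closed inv_inv)+
  show "(\<lambda>t. rep (t \<otimes> x)) ` T \<subseteq> T" "(\<lambda>t. rep (t \<otimes> inv x)) ` T \<subseteq> T"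
    using x transversal_carrier coset_rep_in_transversal by auto
qed

end

locale transfer_setting = right_transversal G H T + A: comm_group A
  for G :: "('a, 'm) monoid_scheme" (structure) and H T and A :: "('b, 'n) monoid_scheme" +
  fixes \<pi> :: "'a \<Rightarrow> 'b"
  assumes finite_carrier: "finite (carrier G)"
    and hom_\<pi>: "\<pi> \<in> hom (G\<lparr>carrier := H\<rparr>) A"
    and one_in_transversal: "\<one> \<in> T"
begin

abbreviation f :: "'a \<Rightarrow> 'b" where "f \<equiv> coset_fun G H T \<pi>"

lemma \<pi>_closed: "h \<in> H \<Longrightarrow> \<pi> h \<in> carrier A"
  using hom_\<pi> unfolding hom_def by auto

lemma \<pi>_mult: "h \<in> H \<Longrightarrow> k \<in> H \<Longrightarrow> \<pi> (h \<otimes> k) = \<pi> h \<otimes>\<^bsub>A\<^esub> \<pi> k"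
  using hom_\<pi> unfolding hom_def by auto

lemma \<pi>_one: "\<pi> \<one> = \<one>\<^bsub>A\<^esub>"
proof -
  interpret group_hom "G\<lparr>carrier := H\<rparr>" A \<pi>
    using hom_\<pi> subgroup_imp_group[OF subgroup_H] A.group_axioms
    by (simp add: group_hom_def group_hom_axioms_def)
  show ?thesis using hom_one by simp
qed

lemma coset_fun_apply [simp]: "y \<in> carrier G \<Longrightarrow> f y = \<pi> (y \<otimes> inv (rep y))"
  unfolding coset_fun_def by simp

lemma coset_fun_closed: "f \<in> carrier G \<rightarrow> carrier A"
  using mult_inv_coset_rep \<pi>_closed by simp

lemma coset_fun_extensional: "f \<in> extensional (carrier G)"
  unfolding coset_fun_def by simp

lemma coset_fun_transversal: "t \<in> T \<Longrightarrow> f t = \<one>\<^bsub>A\<^esub>"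
  using transversal_carrier coset_rep_transversal \<pi>_one by simp

sublocale normalized_group_fun G A f
  using coset_fun_closed coset_fun_extensional coset_fun_transversal[OF one_in_transversal]
  by unfold_locales

lemma coset_fun_mult_subgroup:
  assumes h: "h \<in> H" and y: "y \<in> carrier G"
  shows "f (h \<otimes> y) = \<pi> h \<otimes>\<^bsub>A\<^esub> f y"
proof -
  have "h \<otimes> y \<otimes> inv (rep (h \<otimes> y)) = h \<otimes> (y \<otimes> inv (rep y))"
    using h y subgroup_subset coset_rep_carrier coset_rep_mult_left by (auto simp: m_assoc)
  then show ?thesis
    using h y subgroup_subset mult_inv_coset_rep \<pi>_mult by auto
qed

lemma coset_fun_subgroup: "h \<in> H \<Longrightarrow> f h = \<pi> h"
  using coset_fun_mult_subgroup[of h \<one>] coset_fun_transversal[OF one_in_transversal]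
    subgroup_subset \<pi>_closed by auto

lemma shift_fun_subgroup: "h \<in> H \<Longrightarrow> shift_fun G A f h = f"
proof
  fix x assume h: "h \<in> H"
  show "shift_fun G A f h x = f x"
  proof (cases "x \<in> carrier G")
    case True
    then show ?thesis
      using h coset_fun_closed \<pi>_closed
      by (simp add: coset_fun_mult_subgroup coset_fun_subgroup Pi_iff flip: A.m_assoc)
  qed (simp add: shift_fun_def coset_fun_def)
qed

lemma subgroup_subset_Stab_fun: "H \<subseteq> Stab_fun G A f"
  using shift_fun_subgroup subgroup_subset by (auto simp: Stab_fun_def)

lemma shift_fun_mult_subgroup:
  "h \<in> H \<Longrightarrow> y \<in> carrier G \<Longrightarrow> shift_fun G A f (h \<otimes> y) = shift_fun G A f y"
  using shift_fun_shift_fun[of h y] shift_fun_subgroup subgroup_subset by auto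

lemma shift_fun_coset_rep:
  assumes "y \<in> carrier G"
  shows "shift_fun G A f (rep y) = shift_fun G A f y"
proof -
  have "y = (y \<otimes> inv (rep y)) \<otimes> rep y"
    using assms coset_rep_carrier by (simp add: m_assoc)
  then show ?thesis
    using assms mult_inv_coset_rep coset_rep_carrier shift_fun_mult_subgroup by metis
qed

lemma transfer_map_eq_finprod_shift_fun:
  assumes x: "x \<in> carrier G"
  shows "transfer_map G A H T \<pi> x = (\<Otimes>\<^bsub>A\<^esub>t\<in>T. shift_fun G A f t x)"
  unfolding transfer_map_def
proof (rule A.finprod_cong')
  show "\<pi> (t \<otimes> x \<otimes> inv (rep (t \<otimes> x))) = shift_fun G A f t x" if "t \<in> T" for t
    using that x transversal_carrier coset_fun_transversal coset_fun_closed by (simp add: Pi_iff)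
qed (use x transversal_carrier shift_fun_closed in auto)

lemma finite_transversal: "finite T"
  using finite_carrier transversal_subset by (rule rev_finite_subset)

lemma shift_fun_level_set_eq_UN_rcos:
  assumes "b \<in> carrier G"
  shows "{y \<in> carrier G. shift_fun G A f y = shift_fun G A f b}
    = (\<Union>t\<in>{t \<in> T. shift_fun G A f t = shift_fun G A f b}. H #> t)"
proof (intro equalityI subsetI)
  fix y assume "y \<in> {y \<in> carrier G. shift_fun G A f y = shift_fun G A f b}"
  then have y: "y \<in> carrier G" and "shift_fun G A f (rep y) = shift_fun G A f b"
    using shift_fun_coset_rep by auto
  then show "y \<in> (\<Union>t\<in>{t \<in> T. shift_fun G A f t = shift_fun G A f b}. H #> t)"
    using coset_rep_in_transversal[OF y] mem_rcos_coset_rep[OF y] by (intro UN_I[of "rep y"]) auto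
next
  fix y assume "y \<in> (\<Union>t\<in>{t \<in> T. shift_fun G A f t = shift_fun G A f b}. H #> t)"
  then obtain t h where "t \<in> T" "shift_fun G A f t = shift_fun G A f b" "h \<in> H" "y = h \<otimes> t"
    unfolding r_coset_def by blast
  then show "y \<in> {y \<in> carrier G. shift_fun G A f y = shift_fun G A f b}"
    using transversal_carrier subgroup_subset shift_fun_mult_subgroup by auto
qed

lemma card_transversal_level_set:
  assumes "b \<in> carrier G"
  shows "card {t \<in> T. shift_fun G A f t = shift_fun G A f b} * card H = card (Stab_fun G A f)"
proof -
  let ?L = "{t \<in> T. shift_fun G A f t = shift_fun G A f b}"
  have "card (Stab_fun G A f) = card (\<Union>t\<in>?L. H #> t)"
    using assms card_shift_fun_level_set by (simp flip: shift_fun_level_set_eq_UN_rcos)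
  also have "\<dots> = (\<Sum>t\<in>?L. card (H #> t))"
  proof (rule card_UN_disjoint)
    show "finite ?L" using finite_transversal by simp
    show "\<forall>t\<in>?L. finite (H #> t)"
      using finite_carrier r_coset_subset_G[OF subgroup_subset] transversal_carrier
      by (blast intro: rev_finite_subset)
    show "\<forall>i\<in>?L. \<forall>j\<in>?L. i \<noteq> j \<longrightarrow> (H #> i) \<inter> (H #> j) = {}"
      using coset_rep_eqI by blast
  qed
  also have "\<dots> = (\<Sum>t\<in>?L. card H)"
  proof (rule sum.cong)
    fix t assume "t \<in> ?L"
    then show "card (H #> t) = card H"
      using card_rcosets_equal[OF rcosetsI[OF subgroup_subset] subgroup_subset, of t]
        transversal_carrier by simp
  qed simp
  also have "\<dots> = card ?L * card H" by simp
  finally show ?thesis by simp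
qed

lemma shift_fun_image_transversal: "shift_fun G A f ` T = shift_fun G A f ` carrier G"
proof
  show "shift_fun G A f ` T \<subseteq> shift_fun G A f ` carrier G"
    using transversal_subset by (rule image_mono)
  show "shift_fun G A f ` carrier G \<subseteq> shift_fun G A f ` T"
  proof
    fix \<phi> assume "\<phi> \<in> shift_fun G A f ` carrier G"
    then obtain y where y: "y \<in> carrier G" and "\<phi> = shift_fun G A f (rep y)"
      using shift_fun_coset_rep by auto
    then show "\<phi> \<in> shift_fun G A f ` T" using coset_rep_in_transversal[OF y] by blast
  qed
qed

lemma finprod_shift_fun_eq_avg_fun_pow:
  assumes x: "x \<in> carrier G"
  shows "(\<Otimes>\<^bsub>A\<^esub>t\<in>T. shift_fun G A f t x)
    = avg_fun G A f x [^]\<^bsub>A\<^esub> (card (Stab_fun G A f) div card H)"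
proof -
  have "card H > 0"
    using subgroup.one_closed[OF subgroup_H] finite_carrier subgroup_subset
    by (auto simp: card_gt_0_iff intro: rev_finite_subset)
  have "card {t \<in> T. shift_fun G A f t = \<phi>} = card (Stab_fun G A f) div card H"
    if "\<phi> \<in> shift_fun G A f ` T" for \<phi>
  proof -
    from that obtain b where b: "b \<in> T" and \<phi>: "\<phi> = shift_fun G A f b" by blast
    show ?thesis
      using card_transversal_level_set[OF transversal_carrier[OF b]] \<open>card H > 0\<close>
      unfolding \<phi> by (metis nonzero_mult_div_cancel_right less_not_refl)
  qed
  moreover have "(\<lambda>\<phi>. \<phi> x) \<in> shift_fun G A f ` T \<rightarrow> carrier A"
    using x transversal_carrier shift_fun_closed by auto
  ultimately show ?thesis
    unfolding avg_fun_def shift_fun_image_transversal[symmetric]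
    using A.finprod_comp_const_card_fibres[OF finite_transversal] by blast
qed

lemma transfer_map_hom: "transfer_map G A H T \<pi> \<in> hom G A"
proof (rule homI)
  fix x assume "x \<in> carrier G"
  then show "transfer_map G A H T \<pi> x \<in> carrier A"
    using transfer_map_eq_finprod_shift_fun transversal_carrier shift_fun_closed by auto
next
  fix x y assume x: "x \<in> carrier G" and y: "y \<in> carrier G"
  have closed: "\<And>t z. t \<in> T \<Longrightarrow> z \<in> carrier G \<Longrightarrow> shift_fun G A f t z \<in> carrier A"
    using transversal_carrier shift_fun_closed by blast
  have "(\<Otimes>\<^bsub>A\<^esub>t\<in>T. shift_fun G A f t (x \<otimes> y))
      = (\<Otimes>\<^bsub>A\<^esub>t\<in>T. shift_fun G A f t x \<otimes>\<^bsub>A\<^esub> shift_fun G A f (t \<otimes> x) y)"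
    using x y transversal_carrier shift_fun_mult shift_fun_closed
    by (intro A.finprod_cong') auto
  also have "\<dots> = (\<Otimes>\<^bsub>A\<^esub>t\<in>T. shift_fun G A f t x)
      \<otimes>\<^bsub>A\<^esub> (\<Otimes>\<^bsub>A\<^esub>t\<in>T. shift_fun G A f (t \<otimes> x) y)"
    using x y closed transversal_carrier shift_fun_closed by (intro A.finprod_multf) auto
  also have "(\<Otimes>\<^bsub>A\<^esub>t\<in>T. shift_fun G A f (t \<otimes> x) y)
      = (\<Otimes>\<^bsub>A\<^esub>t\<in>T. shift_fun G A f (rep (t \<otimes> x)) y)"
    using x y transversal_carrier shift_fun_closed shift_fun_coset_rep coset_rep_in_transversal
    by (intro A.finprod_cong') (auto simp del: shift_fun_apply)
  also have "(\<Otimes>\<^bsub>A\<^esub>t\<in>T. shift_fun G A f (rep (t \<otimes> x)) y) = (\<Otimes>\<^bsub>A\<^esub>t\<in>T. shift_fun G A f t y)"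
  proof -
    have "(\<Otimes>\<^bsub>A\<^esub>t\<in>T. shift_fun G A f (rep (t \<otimes> x)) y)
        = (\<Otimes>\<^bsub>A\<^esub>t\<in>(\<lambda>t. rep (t \<otimes> x)) ` T. shift_fun G A f t y)"
      using bij_betw_coset_rep_mult[OF x] y closed
      by (intro A.finprod_reindex[symmetric]) (auto simp: bij_betw_def)
    then show ?thesis
      using bij_betw_coset_rep_mult[OF x] by (simp add: bij_betw_def)
  qed
  finally show "transfer_map G A H T \<pi> (x \<otimes> y)
      = transfer_map G A H T \<pi> x \<otimes>\<^bsub>A\<^esub> transfer_map G A H T \<pi> y"
    using x y by (simp add: transfer_map_eq_finprod_shift_fun)
qed

end

theorem mainTheorem6:
  fixes G :: "('a, 'm) monoid_scheme" and A :: "('b, 'n) monoid_scheme"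
  assumes "group G" and "finite (carrier G)"
    and "subgroup H G"
    and "comm_group A"
    and "\<pi> \<in> hom (G\<lparr>carrier := H\<rparr>) A"
    and "T \<subseteq> carrier G"
    and "\<forall>x\<in>carrier G. \<exists>!t. t \<in> T \<and> x \<in> H #>\<^bsub>G\<^esub> t"
    and "\<one>\<^bsub>G\<^esub> \<in> T"
  shows "(\<forall>h\<in>H. shift_fun G A (coset_fun G H T \<pi>) h = coset_fun G H T \<pi>)
     \<and> H \<subseteq> Stab_fun G A (coset_fun G H T \<pi>)
     \<and> (\<forall>x\<in>carrier G.
          transfer_map G A H T \<pi> x
            = finprod A (\<lambda>t. shift_fun G A (coset_fun G H T \<pi>) t x) T
        \<and> finprod A (\<lambda>t. shift_fun G A (coset_fun G H T \<pi>) t x) T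
            = avg_fun G A (coset_fun G H T \<pi>) x
                [^]\<^bsub>A\<^esub> (card (Stab_fun G A (coset_fun G H T \<pi>)) div card H))
     \<and> transfer_map G A H T \<pi> \<in> hom G A"
proof -
  interpret transfer_setting G H T A \<pi>
    using assms
    by (simp add: transfer_setting_def transfer_setting_axioms_def
        right_transversal_def right_transversal_axioms_def)
  show ?thesis
    using shift_fun_subgroup subgroup_subset_Stab_fun transfer_map_eq_finprod_shift_fun
      finprod_shift_fun_eq_avg_fun_pow transfer_map_hom
    by blast
qed

end
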